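(* Let $\Phi(t)$ be a solution of $m'=[\omega,m]+DL(\Phi,\omega)$, $\Phi'=\omega\Phi$, with (constant) first integrals $h,l,n$, and let $u=\langle r,k\rangle$. Then the cubic polynomial $$P(u)=\frac1p(1-u^2)\left(h-\frac{n^2}{2C}-pu\right)-\frac{1}{2Ap}(l-nu)^2$$ has three real roots $e_1\le e_2\le e_3$ satisfying $-1\le e_1\le e_2\le 1\le e_3$, and $u$ satisfies $$-\frac s2\left(u^2-e_4^2\right)u'^2=(u-e_1)(u-e_2)(u-e_3),\qquad e_4=\sqrt{1+\frac{A}{ps}}.$$
   Context: $\mathrm{SU}(2)$ is the group of complex $2\times2$ matrices $\begin{pmatrix}\alpha&\beta\\ \gamma&\delta\end{pmatrix}$ with $\alpha\delta-\beta\gamma=1$, $\delta=\bar\alpha$, $\gamma=-\bar\beta$; $\mathrm{su}(2)$ is identified with $\mathbb{R}^3$ via $(x_1,x_2,x_3)\mapsto\frac12\begin{pmatrix}ix_3&-x_2+ix_1\\ x_2+ix_1&-ix_3\end{pmatrix}$, with $[x,y]=xy-yx$ and $\langle x,y\rangle=-2\,\mathrm{Tr}(xy)$; $k=\frac12\mathrm{diag}(i,-i)$. Toy top parameters: $A,C>0$ moments of inertia (perpendicular axis through center of mass, symmetry axis), $s>0$ tip-to-center-of-mass distance, $p>0$ equal to $s$ times the mass, gravity normalized to $1$. For a curve $\Phi(t)$ in $\mathrm{SU}(2)$: $\omega=\Phi'\Phi^{-1}$, $r=\Phi k\Phi^{-1}$, $T=\frac12A\langle\omega,\omega\rangle+\frac12(C-A)\langle\omega,r\rangle^2+\frac12ps\langle[r,k],\omega\rangle^2$,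 $V=p\langle r,k\rangle$, $m=A\omega+(C-A)\langle\omega,r\rangle r+ps\langle[r,k],\omega\rangle[r,k]$, $DL(\Phi,\omega)=(C-A)\langle\omega,r\rangle[r,\omega]+ps\langle[r,k],\omega\rangle[r,[k,\omega]]+p[r,k]$. The first integrals are $h=T+V$, $l=\langle m,k\rangle$, $n=\langle m,r\rangle$. *)

theory Defs
  imports "HOL-Analysis.Analysis"
begin

type_synonym cmat = "complex^2^2"

definition SU2 :: "cmat set" where
  "SU2 = {M. M$1$1 * M$2$2 - M$1$2 * M$2$1 = 1 \<and> M$2$2 = cnj (M$1$1) \<and> M$2$1 = - cnj (M$1$2)}"

definition inv2 :: "cmat \<Rightarrow> cmat" where
  "inv2 M = (let d = M$1$1 * M$2$2 - M$1$2 * M$2$1 in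
     (\<chi> i j. if i = 1 \<and> j = 1 then M$2$2 / d
             else if i = 1 \<and> j = 2 then - M$1$2 / d
             else if i = 2 \<and> j = 1 then - M$2$1 / d
             else M$1$1 / d))"

definition kk :: cmat where
  "kk = (\<chi> i j. if i = j then (if i = 1 then \<i> / 2 else - \<i> / 2) else 0)"

definition brk :: "cmat \<Rightarrow> cmat \<Rightarrow> cmat" where
  "brk x y = x ** y - y ** x"

definition ip :: "cmat \<Rightarrow> cmat \<Rightarrow> real" where
  "ip x y = -2 * Re (trace (x ** y))"

definition rr :: "cmat \<Rightarrow> cmat" where
  "rr \<Phi> = \<Phi> ** kk ** inv2 \<Phi>"

definition kinetic :: "real \<Rightarrow> real \<Rightarrow> real \<Rightarrow> real \<Rightarrow> cmat \<Rightarrow> cmat \<Rightarrow> real" where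
  "kinetic A C p s \<Phi> \<omega> =
     1/2 * A * ip \<omega> \<omega> + 1/2 * (C - A) * (ip \<omega> (rr \<Phi>))^2
     + 1/2 * p * s * (ip (brk (rr \<Phi>) kk) \<omega>)^2"

definition potential :: "real \<Rightarrow> cmat \<Rightarrow> real" where
  "potential p \<Phi> = p * ip (rr \<Phi>) kk"

definition mom :: "real \<Rightarrow> real \<Rightarrow> real \<Rightarrow> real \<Rightarrow> cmat \<Rightarrow> cmat \<Rightarrow> cmat" where
  "mom A C p s \<Phi> \<omega> =
     A *\<^sub>R \<omega> + ((C - A) * ip \<omega> (rr \<Phi>)) *\<^sub>R rr \<Phi>
     + (p * s * ip (brk (rr \<Phi>) kk) \<omega>) *\<^sub>R brk (rr \<Phi>) kk"

definition DL :: "real \<Rightarrow> real \<Rightarrow> real \<Rightarrow> real \<Rightarrow> cmat \<Rightarrow> cmat \<Rightarrow> cmat" where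
  "DL A C p s \<Phi> \<omega> =
     ((C - A) * ip \<omega> (rr \<Phi>)) *\<^sub>R brk (rr \<Phi>) \<omega>
     + (p * s * ip (brk (rr \<Phi>) kk) \<omega>) *\<^sub>R brk (rr \<Phi>) (brk kk \<omega>)
     + p *\<^sub>R brk (rr \<Phi>) kk"

definition Pcub :: "real \<Rightarrow> real \<Rightarrow> real \<Rightarrow> real \<Rightarrow> real \<Rightarrow> real \<Rightarrow> real \<Rightarrow> real" where
  "Pcub A C p h l n u =
     (1/p) * (1 - u^2) * (h - n^2 / (2*C) - p*u) - 1 / (2*A*p) * (l - n*u)^2"

end

(*
  Identifying su(2) with R^3 by su2_vec turns the bracket into the cross product and
  <x, y> into the dot product. Along a solution omega lies in su(2) and, Phi being unitary,
  r' = [omega, r]; hence u = <r, k> has derivative sigma = <[r, k], omega>. Decomposing omega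
  along r, [r, k] and k - u r and eliminating its components by the three first integrals gives
  the pointwise identity 2 p P(u) = (A + p s (1 - u^2)) sigma^2, which is the differential
  equation for u and shows P(u) >= 0 at some u in [-1, 1]. Since P is monic with
  P(-1) = -(l + n)^2/(2Ap) <= 0 and P(1) = -(l - n)^2/(2Ap) <= 0, it has two roots in [-1, 1]
  and one in [1, oo); in the boundary cases u = 1 or u = -1 the energy bound
  h - p u >= n^2/(2C) fixes the sign of P' there.
*)

theory Submission
  imports Defs
begin

unbundle cross3_syntax

section \<open>Matrix calculus\<close>

definition ctranspose :: "complex^'n^'m \<Rightarrow> complex^'m^'n" where
  "ctranspose M = (\<chi> i j. cnj (M $ j $ i))"

lemma ctranspose_ctranspose [simp]: "ctranspose (ctranspose M) = M"
  by (simp add: ctranspose_def vec_eq_iff)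

lemma ctranspose_mult: "ctranspose (A ** B) = ctranspose B ** ctranspose A"
  by (simp add: ctranspose_def vec_eq_iff matrix_matrix_mult_def mult.commute)

lemma linear_ctranspose: "linear ctranspose"
  by (rule linearI) (simp_all add: ctranspose_def vec_eq_iff)

lemma bounded_linear_ctranspose: "bounded_linear ctranspose"
  using linear_ctranspose linear_conv_bounded_linear by blast

lemma bounded_bilinear_matrix_mult:
  "bounded_bilinear ((**) :: 'a::{euclidean_space,real_algebra_1}^'n^'m \<Rightarrow> 'a^'k^'n \<Rightarrow> 'a^'k^'m)"
proof -
  have "bilinear ((**) :: 'a^'n^'m \<Rightarrow> 'a^'k^'n \<Rightarrow> 'a^'k^'m)"
    unfolding bilinear_def
    by (auto intro!: linearI simp: matrix_matrix_mult_def vec_eq_iff sum.distrib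
        sum_distrib_left distrib_left distrib_right scaleR_sum_right)
  then show ?thesis
    using bilinear_conv_bounded_bilinear by blast
qed

lemma has_vector_derivative_constant_on_open:
  assumes "(f has_vector_derivative f') (at t)" "open I" "t \<in> I" "\<forall>\<tau>\<in>I. f \<tau> = c"
  shows "f' = 0"
proof -
  have "((\<lambda>_. c) has_vector_derivative f') (at t)"
    using has_vector_derivative_transform_within_open assms by metis
  then show ?thesis
    using has_vector_derivative_const vector_derivative_unique_at by blast
qed

lemma has_vector_derivative_matrix_mult:
  fixes A :: "real \<Rightarrow> 'a::{euclidean_space,real_algebra_1}^'n^'m" and B :: "real \<Rightarrow> 'a^'k^'n"
  assumes "(A has_vector_derivative A') (at t)" "(B has_vector_derivative B') (at t)"
  shows "((\<lambda>\<tau>. A \<tau> ** B \<tau>) has_vector_derivative A t ** B' + A' ** B t) (at t)"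
  using bounded_bilinear.has_vector_derivative[OF bounded_bilinear_matrix_mult assms] .

lemma has_vector_derivative_ctranspose:
  "(A has_vector_derivative A') (at t) \<Longrightarrow>
    ((\<lambda>\<tau>. ctranspose (A \<tau>)) has_vector_derivative ctranspose A') (at t)"
  by (rule bounded_linear.has_vector_derivative[OF bounded_linear_ctranspose])

lemma has_vector_derivative_nth:
  "(A has_vector_derivative A') (at t) \<Longrightarrow>
    ((\<lambda>\<tau>. A \<tau> $ i $ j) has_vector_derivative A' $ i $ j) (at t)"
  by (rule bounded_linear.has_vector_derivative[OF bounded_linear_vec_nth],
      rule bounded_linear.has_vector_derivative[OF bounded_linear_vec_nth])

lemma has_vector_derivative_det_2:
  fixes A :: "real \<Rightarrow> 'a::real_normed_field^2^2"
  assumes "(A has_vector_derivative X ** A t) (at t)"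
  shows "((\<lambda>\<tau>. det (A \<tau>)) has_vector_derivative trace X * det (A t)) (at t)"
proof -
  have "((\<lambda>\<tau>. det (A \<tau>)) has_vector_derivative
      A t$1$1 * (X ** A t)$2$2 + (X ** A t)$1$1 * A t$2$2
      - (A t$1$2 * (X ** A t)$2$1 + (X ** A t)$1$2 * A t$2$1)) (at t)"
    unfolding det_2
    by (intro has_vector_derivative_diff has_vector_derivative_mult has_vector_derivative_nth assms)
  then show ?thesis
    by (simp add: matrix_matrix_mult_def sum_2 trace_def det_2 algebra_simps)
qed

section \<open>The Lie algebra su(2) as Euclidean 3-space\<close>

definition su2 :: "cmat set" where
  "su2 = {X. ctranspose X = - X \<and> trace X = 0}"

definition su2_vec :: "real^3 \<Rightarrow> cmat" where
  "su2_vec x = (1/2) *\<^sub>R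
     vector [vector [\<i> * x$3, - x$2 + \<i> * x$1], vector [x$2 + \<i> * x$1, - \<i> * x$3]]"

lemma su2_vec_nth:
  "su2_vec x $ 1 $ 1 = Complex 0 (x$3/2)" "su2_vec x $ 1 $ 2 = Complex (- x$2/2) (x$1/2)"
  "su2_vec x $ 2 $ 1 = Complex (x$2/2) (x$1/2)" "su2_vec x $ 2 $ 2 = Complex 0 (- x$3/2)"
  by (simp_all add: su2_vec_def complex_eq_iff)

lemma su2_vec_eq_iff: "M = su2_vec x \<longleftrightarrow>
    M$1$1 = Complex 0 (x$3/2) \<and> M$1$2 = Complex (- x$2/2) (x$1/2) \<and>
    M$2$1 = Complex (x$2/2) (x$1/2) \<and> M$2$2 = Complex 0 (- x$3/2)"
  by (auto simp: vec_eq_iff forall_2 su2_vec_nth)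

lemma ip_su2_vec: "ip (su2_vec x) (su2_vec y) = x \<bullet> y"
  by (simp add: ip_def trace_def matrix_matrix_mult_def sum_2 su2_vec_nth inner_vec_def sum_3
      algebra_simps)

lemma brk_su2_vec: "brk (su2_vec x) (su2_vec y) = su2_vec (x \<times> y)"
  by (simp add: brk_def su2_vec_eq_iff matrix_matrix_mult_def sum_2 su2_vec_nth cross_components
      complex_eq_iff algebra_simps)

lemma kk_eq_su2_vec: "kk = su2_vec (axis 3 1)"
  by (simp add: kk_def su2_vec_eq_iff axis_def complex_eq_iff)

lemma su2_vec_add: "su2_vec (x + y) = su2_vec x + su2_vec y"
  by (simp add: vec_eq_iff forall_2 su2_vec_nth complex_eq_iff)

lemma su2_vec_scaleR: "su2_vec (c *\<^sub>R x) = c *\<^sub>R su2_vec x"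
  by (simp add: vec_eq_iff forall_2 su2_vec_nth complex_eq_iff)

lemma su2E:
  assumes "X \<in> su2"
  obtains x where "X = su2_vec x"
proof
  have "X$1$1 = - cnj (X$1$1)" "X$1$2 = - cnj (X$2$1)" "X$2$2 = - cnj (X$2$2)"
    and "X$1$1 + X$2$2 = 0"
    using assms by (auto simp: su2_def ctranspose_def vec_eq_iff forall_2 trace_def sum_2)
  then show "X = su2_vec (vector [2 * Im (X$1$2), - 2 * Re (X$1$2), 2 * Im (X$1$1)])"
    by (simp add: su2_vec_eq_iff complex_eq_iff)
qed

lemma bounded_linear_ip_left: "bounded_linear (\<lambda>X. ip X Y)"
proof -
  have "linear (\<lambda>X. ip X Y)"
    by (rule linearI) (simp_all add: ip_def trace_def matrix_matrix_mult_def sum_2 algebra_simps)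
  then show ?thesis
    using linear_conv_bounded_linear by blast
qed

section \<open>SU(2) and its curves\<close>

lemma trace_conj_unitary:
  assumes "ctranspose U ** U = mat 1"
  shows "trace (U ** Z ** ctranspose U) = trace Z"
  using assms by (metis matrix_mul_assoc matrix_mul_rid trace_mul_sym)

lemma su2_conj_unitary:
  assumes "ctranspose U ** U = mat 1" and "X \<in> su2"
  shows "U ** X ** ctranspose U \<in> su2"
  using assms trace_conj_unitary[OF assms(1)]
  by (simp add: su2_def ctranspose_mult matrix_mul_assoc
      bounded_bilinear.minus_left[OF bounded_bilinear_matrix_mult]
      bounded_bilinear.minus_right[OF bounded_bilinear_matrix_mult])

lemma ip_conj_unitary:
  assumes "ctranspose U ** U = mat 1"
  shows "ip (U ** X ** ctranspose U) (U ** Y ** ctranspose U) = ip X Y"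
proof -
  have "U ** X ** ctranspose U ** (U ** Y ** ctranspose U)
      = U ** X ** (ctranspose U ** U) ** Y ** ctranspose U"
    by (simp add: matrix_mul_assoc)
  also have "\<dots> = U ** (X ** Y) ** ctranspose U"
    using assms by (simp add: matrix_mul_assoc)
  finally show ?thesis
    by (simp add: ip_def trace_conj_unitary[OF assms])
qed

lemma SU2_det: "M \<in> SU2 \<Longrightarrow> det M = 1"
  unfolding SU2_def det_2 by blast

lemma SU2_inv2:
  assumes "M \<in> SU2"
  shows "inv2 M = ctranspose M"
proof -
  have "M$1$1 * M$2$2 - M$1$2 * M$2$1 = 1" "M$2$2 = cnj (M$1$1)" "M$2$1 = - cnj (M$1$2)"
    using assms by (auto simp: SU2_def)
  then show ?thesis
    unfolding inv2_def Let_def by (simp add: ctranspose_def vec_eq_iff forall_2)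
qed

lemma SU2_unitary:
  assumes "M \<in> SU2"
  shows "M ** ctranspose M = mat 1" "ctranspose M ** M = mat 1"
proof -
  have shape: "M$2$2 = cnj (M$1$1)" "M$2$1 = - cnj (M$1$2)"
    and norm1: "M$1$1 * cnj (M$1$1) + M$1$2 * cnj (M$1$2) = 1"
    using assms by (auto simp: SU2_def)
  show "M ** ctranspose M = mat 1" "ctranspose M ** M = mat 1"
    using norm1 by (simp_all add: ctranspose_def vec_eq_iff forall_2 matrix_matrix_mult_def sum_2
        mat_def shape mult.commute add.commute)
qed

lemma rr_SU2: "M \<in> SU2 \<Longrightarrow> rr M = M ** kk ** ctranspose M"
  by (simp add: rr_def SU2_inv2)

lemma kk_in_su2: "kk \<in> su2"
  by (simp add: su2_def kk_def ctranspose_def trace_def sum_2 vec_eq_iff forall_2)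

lemma ip_kk_kk: "ip kk kk = 1"
  by (simp add: kk_eq_su2_vec ip_su2_vec)

lemma rr_SU2E:
  assumes "M \<in> SU2"
  obtains \<rho> where "rr M = su2_vec \<rho>" "norm \<rho> = 1"
proof -
  have "rr M \<in> su2"
    using assms SU2_unitary(2) kk_in_su2 su2_conj_unitary by (simp add: rr_SU2)
  then obtain \<rho> where \<rho>: "rr M = su2_vec \<rho>"
    by (rule su2E)
  have "\<rho> \<bullet> \<rho> = 1"
    using ip_conj_unitary[OF SU2_unitary(2)[OF assms]] \<rho> assms
    by (metis ip_kk_kk ip_su2_vec rr_SU2)
  with \<rho> show thesis
    using that norm_eq_1 by blast
qed

lemma SU2_velocity_in_su2:
  assumes I: "open I" "t \<in> I" and SU2: "\<forall>\<tau>\<in>I. \<Phi> \<tau> \<in> SU2"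
    and \<Phi>': "(\<Phi> has_vector_derivative \<omega> ** \<Phi> t) (at t)"
  shows "\<omega> \<in> su2"
proof -
  have unitary: "\<Phi> t ** ctranspose (\<Phi> t) = mat 1"
    using SU2 I SU2_unitary by blast
  have "((\<lambda>\<tau>. \<Phi> \<tau> ** ctranspose (\<Phi> \<tau>)) has_vector_derivative
      \<Phi> t ** ctranspose (\<omega> ** \<Phi> t) + \<omega> ** \<Phi> t ** ctranspose (\<Phi> t)) (at t)"
    by (intro has_vector_derivative_matrix_mult has_vector_derivative_ctranspose \<Phi>')
  then have "\<Phi> t ** ctranspose (\<omega> ** \<Phi> t) + \<omega> ** \<Phi> t ** ctranspose (\<Phi> t) = 0"
    using has_vector_derivative_constant_on_open[OF _ I] SU2 SU2_unitary by blast
  moreover have "\<Phi> t ** ctranspose (\<omega> ** \<Phi> t) = ctranspose \<omega>"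
    using unitary by (simp add: ctranspose_mult matrix_mul_assoc)
  moreover have "\<omega> ** \<Phi> t ** ctranspose (\<Phi> t) = \<omega>"
    using unitary by (simp add: matrix_mul_assoc[symmetric])
  ultimately have skew: "ctranspose \<omega> = - \<omega>"
    by (simp add: eq_neg_iff_add_eq_0)
  have "trace \<omega> * det (\<Phi> t) = 0"
    using has_vector_derivative_det_2[OF \<Phi>'] has_vector_derivative_constant_on_open[OF _ I]
      SU2 SU2_det by blast
  then have "trace \<omega> = 0"
    using SU2_det SU2 I by simp
  with skew show ?thesis
    by (simp add: su2_def)
qed

lemma rr_has_vector_derivative:
  assumes I: "open I" "t \<in> I" and SU2: "\<forall>\<tau>\<in>I. \<Phi> \<tau> \<in> SU2"
    and \<Phi>': "(\<Phi> has_vector_derivative \<omega> ** \<Phi> t) (at t)"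
  shows "((\<lambda>\<tau>. rr (\<Phi> \<tau>)) has_vector_derivative brk \<omega> (rr (\<Phi> t))) (at t)"
proof -
  have skew: "ctranspose \<omega> = - \<omega>"
    using SU2_velocity_in_su2[OF assms] by (simp add: su2_def)
  have "((\<lambda>\<tau>. \<Phi> \<tau> ** kk) has_vector_derivative \<omega> ** \<Phi> t ** kk) (at t)"
    using has_vector_derivative_matrix_mult[OF \<Phi>' has_vector_derivative_const] by simp
  then have "((\<lambda>\<tau>. \<Phi> \<tau> ** kk ** ctranspose (\<Phi> \<tau>)) has_vector_derivative
      \<Phi> t ** kk ** ctranspose (\<omega> ** \<Phi> t) + \<omega> ** \<Phi> t ** kk ** ctranspose (\<Phi> t)) (at t)"
    by (intro has_vector_derivative_matrix_mult has_vector_derivative_ctranspose \<Phi>')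
  moreover have "\<Phi> t ** kk ** ctranspose (\<omega> ** \<Phi> t) + \<omega> ** \<Phi> t ** kk ** ctranspose (\<Phi> t)
      = brk \<omega> (rr (\<Phi> t))"
    using SU2 I skew
    by (simp add: rr_SU2 brk_def ctranspose_mult matrix_mul_assoc
        bounded_bilinear.minus_right[OF bounded_bilinear_matrix_mult])
  ultimately show ?thesis
    using has_vector_derivative_transform_within_open[OF _ I] SU2 rr_SU2
    by (metis (no_types, lifting))
qed

section \<open>The first integrals in coordinates\<close>

(* Parseval in the orthogonal frame \<rho>, \<rho> \<times> \<kappa>, \<kappa> - (\<rho> \<bullet> \<kappa>) \<rho>,
   whose last two vectors have squared length 1 - (\<rho> \<bullet> \<kappa>)\<^sup>2. *)
lemma norm_cross_inner_decomposition:
  fixes \<rho> \<kappa> w :: "real^3"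
  assumes "norm \<rho> = 1" "norm \<kappa> = 1"
  shows "(1 - (\<rho> \<bullet> \<kappa>)\<^sup>2) * (w \<bullet> w)
    = ((\<rho> \<times> \<kappa>) \<bullet> w)\<^sup>2 + (w \<bullet> \<rho>)\<^sup>2 + (w \<bullet> \<kappa>)\<^sup>2 - 2 * (\<rho> \<bullet> \<kappa>) * (w \<bullet> \<rho>) * (w \<bullet> \<kappa>)"
proof -
  have "(\<rho> \<times> \<kappa>) \<times> w = (w \<bullet> \<rho>) *\<^sub>R \<kappa> - (w \<bullet> \<kappa>) *\<^sub>R \<rho>"
    by (metis Lagrange cross_skew minus_diff_eq)
  then have "(norm ((\<rho> \<times> \<kappa>) \<times> w))\<^sup>2 = (norm ((w \<bullet> \<rho>) *\<^sub>R \<kappa> - (w \<bullet> \<kappa>) *\<^sub>R \<rho>))\<^sup>2"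
    by (simp only:)
  also have "\<dots> = (w \<bullet> \<rho>)\<^sup>2 + (w \<bullet> \<kappa>)\<^sup>2 - 2 * (\<rho> \<bullet> \<kappa>) * (w \<bullet> \<rho>) * (w \<bullet> \<kappa>)"
    unfolding power2_norm_eq_inner using assms
    by (simp add: inner_diff_left inner_diff_right inner_commute power2_eq_square norm_eq_1
        algebra_simps)
  finally have "(norm ((\<rho> \<times> \<kappa>) \<times> w))\<^sup>2 = (w \<bullet> \<rho>)\<^sup>2 + (w \<bullet> \<kappa>)\<^sup>2 - 2 * (\<rho> \<bullet> \<kappa>) * (w \<bullet> \<rho>) * (w \<bullet> \<kappa>)" .
  moreover have "(norm (\<rho> \<times> \<kappa>))\<^sup>2 = 1 - (\<rho> \<bullet> \<kappa>)\<^sup>2"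
    using assms by (simp add: norm_cross)
  ultimately show ?thesis
    using norm_cross_dot[of "\<rho> \<times> \<kappa>" w] by (simp add: power_mult_distrib power2_norm_eq_inner)
qed

lemma first_integrals_su2_vec:
  assumes r: "rr M = su2_vec \<rho>" and \<rho>: "norm \<rho> = 1" and \<omega>: "\<omega> = su2_vec w"
  shows "kinetic A C p s M \<omega>
      = A / 2 * (w \<bullet> w) + (C - A) / 2 * (w \<bullet> \<rho>)\<^sup>2 + p * s / 2 * ((\<rho> \<times> axis 3 1) \<bullet> w)\<^sup>2"
    and "potential p M = p * (\<rho> \<bullet> axis 3 1)"
    and "ip (mom A C p s M \<omega>) kk = A * (w \<bullet> axis 3 1) + (C - A) * (w \<bullet> \<rho>) * (\<rho> \<bullet> axis 3 1)"
    and "ip (mom A C p s M \<omega>) (rr M) = C * (w \<bullet> \<rho>)"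
proof -
  have mom: "mom A C p s M \<omega> = su2_vec (A *\<^sub>R w + ((C - A) * (w \<bullet> \<rho>)) *\<^sub>R \<rho>
      + (p * s * ((\<rho> \<times> axis 3 1) \<bullet> w)) *\<^sub>R (\<rho> \<times> axis 3 1))"
    by (simp add: mom_def r \<omega> kk_eq_su2_vec brk_su2_vec ip_su2_vec su2_vec_add su2_vec_scaleR
        inner_commute)
  show "kinetic A C p s M \<omega>
      = A / 2 * (w \<bullet> w) + (C - A) / 2 * (w \<bullet> \<rho>)\<^sup>2 + p * s / 2 * ((\<rho> \<times> axis 3 1) \<bullet> w)\<^sup>2"
    by (simp add: kinetic_def r \<omega> kk_eq_su2_vec brk_su2_vec ip_su2_vec inner_commute)
  show "potential p M = p * (\<rho> \<bullet> axis 3 1)"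
    by (simp add: potential_def r kk_eq_su2_vec ip_su2_vec)
  show "ip (mom A C p s M \<omega>) kk = A * (w \<bullet> axis 3 1) + (C - A) * (w \<bullet> \<rho>) * (\<rho> \<bullet> axis 3 1)"
    by (simp add: mom kk_eq_su2_vec ip_su2_vec inner_add_left dot_cross_self)
  show "ip (mom A C p s M \<omega>) (rr M) = C * (w \<bullet> \<rho>)"
    using \<rho> by (simp add: mom r ip_su2_vec dot_cross_self norm_eq_1 algebra_simps)
qed

lemma Pcub_first_integrals:
  fixes \<rho> \<kappa> w :: "real^3"
  assumes A: "A > 0" and C: "C > 0" and p: "p > 0" and s: "s > 0"
    and \<rho>: "norm \<rho> = 1" and \<kappa>: "norm \<kappa> = 1"
    and h: "h = A / 2 * (w \<bullet> w) + (C - A) / 2 * (w \<bullet> \<rho>)\<^sup>2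
      + p * s / 2 * ((\<rho> \<times> \<kappa>) \<bullet> w)\<^sup>2 + p * (\<rho> \<bullet> \<kappa>)"
    and l: "l = A * (w \<bullet> \<kappa>) + (C - A) * (w \<bullet> \<rho>) * (\<rho> \<bullet> \<kappa>)"
    and n: "n = C * (w \<bullet> \<rho>)"
  shows "2 * p * Pcub A C p h l n (\<rho> \<bullet> \<kappa>) = (A + p * s * (1 - (\<rho> \<bullet> \<kappa>)\<^sup>2)) * ((\<rho> \<times> \<kappa>) \<bullet> w)\<^sup>2"
    and "n\<^sup>2 / (2 * C) \<le> h - p * (\<rho> \<bullet> \<kappa>)"
proof -
  define u x y \<sigma> W where "u = \<rho> \<bullet> \<kappa>" "x = w \<bullet> \<rho>" "y = w \<bullet> \<kappa>" "\<sigma> = (\<rho> \<times> \<kappa>) \<bullet> w" "W = w \<bullet> w"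
  have gram: "(1 - u\<^sup>2) * W = \<sigma>\<^sup>2 + x\<^sup>2 + y\<^sup>2 - 2 * u * x * y"
    unfolding u_x_y_\<sigma>_W_def by (rule norm_cross_inner_decomposition[OF \<rho> \<kappa>])
  have energy: "2 * (h - p * u) - n\<^sup>2 / C = A * (W - x\<^sup>2) + p * s * \<sigma>\<^sup>2"
    using C unfolding h n u_x_y_\<sigma>_W_def by (simp add: field_simps power2_eq_square)
  have "2 * p * Pcub A C p h l n u = (1 - u\<^sup>2) * (2 * (h - p * u) - n\<^sup>2 / C) - (l - n * u)\<^sup>2 / A"
    using A C p by (simp add: Pcub_def field_simps)
  also have "l - n * u = A * (y - x * u)"
    unfolding l n u_x_y_\<sigma>_W_def by (simp add: algebra_simps)
  also have "(1 - u\<^sup>2) * (2 * (h - p * u) - n\<^sup>2 / C) - (A * (y - x * u))\<^sup>2 / A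
      = (1 - u\<^sup>2) * (A * (W - x\<^sup>2) + p * s * \<sigma>\<^sup>2) - A * (y - x * u)\<^sup>2"
    using A unfolding energy by (simp add: power2_eq_square)
  also have "\<dots> = (A + p * s * (1 - u\<^sup>2)) * \<sigma>\<^sup>2
      + A * ((1 - u\<^sup>2) * W - (\<sigma>\<^sup>2 + x\<^sup>2 + y\<^sup>2 - 2 * u * x * y))"
    by (simp add: power2_eq_square algebra_simps)
  also have "\<dots> = (A + p * s * (1 - u\<^sup>2)) * \<sigma>\<^sup>2"
    by (simp add: gram)
  finally show "2 * p * Pcub A C p h l n (\<rho> \<bullet> \<kappa>) = (A + p * s * (1 - (\<rho> \<bullet> \<kappa>)\<^sup>2)) * ((\<rho> \<times> \<kappa>) \<bullet> w)\<^sup>2"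
    unfolding u_x_y_\<sigma>_W_def .
  have "x\<^sup>2 \<le> W"
    using Cauchy_Schwarz_ineq[of w \<rho>] \<rho> unfolding u_x_y_\<sigma>_W_def by (simp add: norm_eq_1)
  then have "0 \<le> 2 * (h - p * u) - n\<^sup>2 / C"
    unfolding energy using A p s by simp
  then show "n\<^sup>2 / (2 * C) \<le> h - p * (\<rho> \<bullet> \<kappa>)"
    unfolding u_x_y_\<sigma>_W_def by simp
qed

lemma nutation_form:
  fixes P u \<sigma> :: real
  assumes A: "A > 0" and p: "p > 0" and s: "s > 0" and u: "\<bar>u\<bar> \<le> 1"
    and key: "2 * p * P = (A + p * s * (1 - u\<^sup>2)) * \<sigma>\<^sup>2"
  shows "- (s / 2) * (u\<^sup>2 - (sqrt (1 + A / (p * s)))\<^sup>2) * \<sigma>\<^sup>2 = P" and "0 \<le> P"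
proof -
  have "P = (A + p * s * (1 - u\<^sup>2)) * \<sigma>\<^sup>2 / (2 * p)"
    using key p by (simp add: field_simps)
  also have "\<dots> = - (s / 2) * (u\<^sup>2 - (1 + A / (p * s))) * \<sigma>\<^sup>2"
    using p s by (simp add: field_simps)
  also have "1 + A / (p * s) = (sqrt (1 + A / (p * s)))\<^sup>2"
    using A p s by simp
  finally show "- (s / 2) * (u\<^sup>2 - (sqrt (1 + A / (p * s)))\<^sup>2) * \<sigma>\<^sup>2 = P"
    by simp
  have "u\<^sup>2 \<le> 1"
    using u abs_square_le_1 by blast
  then have "0 \<le> 2 * p * P"
    unfolding key using A p s by simp
  then show "0 \<le> P"
    using p by (simp add: zero_le_mult_iff)
qed

lemma nutation_at:
  assumes A: "A > 0" and C: "C > 0" and p: "p > 0" and s: "s > 0"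
    and I: "open I" "t \<in> I" and SU2: "\<forall>\<tau>\<in>I. \<Phi> \<tau> \<in> SU2"
    and \<Phi>': "(\<Phi> has_vector_derivative \<omega> ** \<Phi> t) (at t)"
    and h: "kinetic A C p s (\<Phi> t) \<omega> + potential p (\<Phi> t) = h"
    and l: "ip (mom A C p s (\<Phi> t) \<omega>) kk = l"
    and n: "ip (mom A C p s (\<Phi> t) \<omega>) (rr (\<Phi> t)) = n"
  defines "u \<equiv> \<lambda>\<tau>. ip (rr (\<Phi> \<tau>)) kk"
  obtains \<sigma> where "(u has_real_derivative \<sigma>) (at t)"
    and "- (s / 2) * ((u t)\<^sup>2 - (sqrt (1 + A / (p * s)))\<^sup>2) * \<sigma>\<^sup>2 = Pcub A C p h l n (u t)"
    and "\<bar>u t\<bar> \<le> 1" and "0 \<le> Pcub A C p h l n (u t)" and "n\<^sup>2 / (2 * C) \<le> h - p * u t"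
proof -
  obtain w where w: "\<omega> = su2_vec w"
    using SU2_velocity_in_su2[OF I SU2 \<Phi>'] su2E by blast
  obtain \<rho> where \<rho>: "rr (\<Phi> t) = su2_vec \<rho>" "norm \<rho> = 1"
    using SU2 I rr_SU2E by blast
  define \<kappa> :: "real^3" where "\<kappa> = axis 3 1"
  define \<sigma> where "\<sigma> = (\<rho> \<times> \<kappa>) \<bullet> w"
  have u_t: "u t = \<rho> \<bullet> \<kappa>"
    by (simp add: u_def \<rho> \<kappa>_def kk_eq_su2_vec ip_su2_vec)
  have "(u has_vector_derivative ip (brk \<omega> (rr (\<Phi> t))) kk) (at t)"
    unfolding u_def
    by (rule bounded_linear.has_vector_derivative[OF bounded_linear_ip_left
          rr_has_vector_derivative[OF I SU2 \<Phi>']])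
  moreover have "ip (brk \<omega> (rr (\<Phi> t))) kk = \<sigma>"
    using cross_triple[of w \<rho> \<kappa>]
    by (simp add: \<sigma>_def w \<rho> \<kappa>_def kk_eq_su2_vec brk_su2_vec ip_su2_vec)
  ultimately have u': "(u has_real_derivative \<sigma>) (at t)"
    by (simp add: has_real_derivative_iff_has_vector_derivative)
  have u_bound: "\<bar>u t\<bar> \<le> 1"
    using Cauchy_Schwarz_ineq2[of \<rho> \<kappa>] \<rho>(2) by (simp add: u_t \<kappa>_def)
  have "h = A / 2 * (w \<bullet> w) + (C - A) / 2 * (w \<bullet> \<rho>)\<^sup>2
      + p * s / 2 * ((\<rho> \<times> \<kappa>) \<bullet> w)\<^sup>2 + p * (\<rho> \<bullet> \<kappa>)"
    "l = A * (w \<bullet> \<kappa>) + (C - A) * (w \<bullet> \<rho>) * (\<rho> \<bullet> \<kappa>)" "n = C * (w \<bullet> \<rho>)"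
    using h l n first_integrals_su2_vec[OF \<rho> w] by (simp_all add: \<kappa>_def)
  moreover have "norm \<kappa> = 1"
    by (simp add: \<kappa>_def)
  ultimately have key: "2 * p * Pcub A C p h l n (u t) = (A + p * s * (1 - (u t)\<^sup>2)) * \<sigma>\<^sup>2"
    and energy: "n\<^sup>2 / (2 * C) \<le> h - p * u t"
    using Pcub_first_integrals[OF A C p s \<rho>(2)] by (simp_all add: u_t \<sigma>_def)
  show thesis
    using that u' u_bound energy nutation_form[OF A p s u_bound key] by blast
qed

section \<open>Roots of the cubic\<close>

lemma monic_quadratic_real_roots:
  fixes b c y :: real
  assumes "y\<^sup>2 + b * y + c \<le> 0"
  obtains q1 q2 where "q1 \<le> y" "y \<le> q2" "\<And>t. t\<^sup>2 + b * t + c = (t - q1) * (t - q2)"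
proof
  define D where "D = b\<^sup>2 - 4 * c"
  have y: "(2 * y + b)\<^sup>2 \<le> D"
    using assms unfolding D_def by (simp add: power2_eq_square algebra_simps)
  then have D: "0 \<le> D"
    using zero_le_power2 order_trans by blast
  have "\<bar>2 * y + b\<bar> \<le> sqrt D"
    using real_sqrt_le_mono[OF y] by simp
  then show "(- b - sqrt D) / 2 \<le> y" "y \<le> (- b + sqrt D) / 2"
    by (auto simp: abs_le_iff field_simps)
  fix t
  have "(t - (- b - sqrt D) / 2) * (t - (- b + sqrt D) / 2) = t\<^sup>2 + b * t + (b\<^sup>2 - (sqrt D)\<^sup>2) / 4"
    by (simp add: field_simps power2_eq_square)
  also have "\<dots> = t\<^sup>2 + b * t + c"
    using D by (simp add: D_def)
  finally show "t\<^sup>2 + b * t + c = (t - (- b - sqrt D) / 2) * (t - (- b + sqrt D) / 2)" ..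
qed

lemma monic_cubic_root_ge:
  fixes a b c z :: real
  assumes "z ^ 3 + a * z\<^sup>2 + b * z + c \<le> 0"
  obtains e where "z \<le> e" "e ^ 3 + a * e\<^sup>2 + b * e + c = 0"
proof -
  define M where "M = \<bar>z\<bar> + 1 + \<bar>a\<bar> + \<bar>b\<bar> + \<bar>c\<bar>"
  have "1 \<le> M" "z \<le> M"
    by (auto simp: M_def)
  then have "M \<le> M\<^sup>2" "1 \<le> M\<^sup>2"
    using one_le_power[of M 2] by (simp_all add: power2_eq_square)
  then have "\<bar>b\<bar> * M \<le> \<bar>b\<bar> * M\<^sup>2" "\<bar>c\<bar> \<le> \<bar>c\<bar> * M\<^sup>2"
    by (simp_all add: mult_left_mono mult_le_cancel_left1)
  moreover have "- \<bar>a\<bar> * M\<^sup>2 \<le> a * M\<^sup>2" "- \<bar>b\<bar> * M \<le> b * M"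
    using mult_right_mono[of "- \<bar>a\<bar>" a "M\<^sup>2"] mult_right_mono[of "- \<bar>b\<bar>" b M] \<open>1 \<le> M\<close>
    by simp_all
  ultimately have "M\<^sup>2 * (M - \<bar>a\<bar> - \<bar>b\<bar> - \<bar>c\<bar>) \<le> M ^ 3 + a * M\<^sup>2 + b * M + c"
    by (simp add: power3_eq_cube power2_eq_square algebra_simps)
  moreover have "0 \<le> M\<^sup>2 * (M - \<bar>a\<bar> - \<bar>b\<bar> - \<bar>c\<bar>)"
    by (simp add: M_def)
  moreover have "continuous_on {z..M} (\<lambda>t. t ^ 3 + a * t\<^sup>2 + b * t + c)"
    by (intro continuous_intros)
  ultimately obtain e where "z \<le> e" "e \<le> M" "e ^ 3 + a * e\<^sup>2 + b * e + c = 0"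
    using IVT'[of "\<lambda>t. t ^ 3 + a * t\<^sup>2 + b * t + c" z 0 M] assms \<open>z \<le> M\<close> by auto
  then show thesis
    using that by blast
qed

lemma monic_cubic_factorization:
  fixes a b c x :: real
  defines "f \<equiv> \<lambda>t. t ^ 3 + a * t\<^sup>2 + b * t + c"
  assumes f_1: "f 1 \<le> 0" and x: "x \<le> 1" "0 \<le> f x"
    and deriv_1: "x = 1 \<Longrightarrow> 3 + 2 * a + b \<le> 0"
  obtains q1 q2 e where "q1 \<le> x" "x \<le> q2" "1 \<le> e" "\<And>t. f t = (t - q1) * (t - q2) * (t - e)"
proof -
  obtain e where e: "1 \<le> e" "f e = 0"
    using monic_cubic_root_ge[of 1 a b c] f_1 unfolding f_def by auto
  define \<beta> \<gamma> where "\<beta> = a + e" and "\<gamma> = b + e * (a + e)"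
  have f_factor: "f t = (t - e) * (t\<^sup>2 + \<beta> * t + \<gamma>)" for t
  proof -
    have "c = - e * \<gamma>"
      using e(2) by (simp add: f_def \<beta>_def \<gamma>_def power2_eq_square power3_eq_cube algebra_simps)
    then show ?thesis
      by (simp add: f_def \<beta>_def \<gamma>_def power2_eq_square power3_eq_cube algebra_simps)
  qed
  have "x\<^sup>2 + \<beta> * x + \<gamma> \<le> 0"
  proof (cases "x < e")
    case True
    then show ?thesis
      using x(2) f_factor[of x] by (simp add: zero_le_mult_iff)
  next
    case False
    then have "x = 1" "e = 1"
      using x e by auto
    then show ?thesis
      using deriv_1 by (simp add: \<beta>_def \<gamma>_def)
  qed
  then obtain q1 q2 where "q1 \<le> x" "x \<le> q2" "\<And>t. t\<^sup>2 + \<beta> * t + \<gamma> = (t - q1) * (t - q2)"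
    using monic_quadratic_real_roots by blast
  with e(1) show thesis
    using that[of q1 q2 e] by (simp add: f_factor mult_ac)
qed

(* The conditions on f'(1) = 3 + 2 a + b and f'(-1) = 3 - 2 a + b cannot be dropped:
   (t - 1) (t\<^sup>2 + 1) with x = 1 satisfies all other hypotheses. *)
lemma monic_cubic_roots_location:
  fixes a b c x :: real
  defines "f \<equiv> \<lambda>t. t ^ 3 + a * t\<^sup>2 + b * t + c"
  assumes f_minus1: "f (- 1) \<le> 0" and f_1: "f 1 \<le> 0"
    and x: "- 1 \<le> x" "x \<le> 1" "0 \<le> f x"
    and deriv_1: "x = 1 \<Longrightarrow> 3 + 2 * a + b \<le> 0"
    and deriv_minus1: "x = - 1 \<Longrightarrow> 0 \<le> 3 - 2 * a + b"
  shows "\<exists>e1 e2 e3. - 1 \<le> e1 \<and> e1 \<le> e2 \<and> e2 \<le> 1 \<and> 1 \<le> e3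
    \<and> (\<forall>t. f t = (t - e1) * (t - e2) * (t - e3))"
proof -
  obtain q1 q2 e where q: "q1 \<le> x" "x \<le> q2" and e: "1 \<le> e"
    and f_roots: "\<And>t. f t = (t - q1) * (t - q2) * (t - e)"
    using monic_cubic_factorization[of a b c x] f_1 x deriv_1 unfolding f_def by blast
  have a: "a = - (q1 + q2 + e)" and b: "b = q1 * q2 + e * (q1 + q2)"
    using f_roots[of 0] f_roots[of 1] f_roots[of "- 1"] unfolding f_def
    by (simp_all add: algebra_simps)
  have q1: "- 1 \<le> q1"
  proof (rule ccontr)
    assume "\<not> - 1 \<le> q1"
    then have neg: "(- 1 - q1) * (- 1 - e) < 0"
      using e by (simp add: mult_pos_neg)
    moreover have "(- 1 - q1) * (- 1 - e) * (- 1 - q2) \<le> 0"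
      using f_minus1 by (simp add: f_roots mult_ac)
    ultimately have "0 \<le> - 1 - q2"
      using mult_le_cancel_left_neg[OF neg, of "- 1 - q2" 0] by simp
    then have "q2 = - 1" "x = - 1"
      using q x by auto
    then have "3 - 2 * a + b = (- 1 - q1) * (- 1 - e)"
      unfolding a b by (simp add: algebra_simps)
    then show False
      using deriv_minus1 \<open>x = - 1\<close> neg by simp
  qed
  have min: "min q2 e \<le> 1"
  proof (rule ccontr)
    assume "\<not> min q2 e \<le> 1"
    then have pos: "0 < (1 - q2) * (1 - e)"
      by (simp add: mult_neg_neg)
    moreover have "(1 - q1) * ((1 - q2) * (1 - e)) \<le> 0"
      using f_1 by (simp add: f_roots mult_ac)
    ultimately have "1 \<le> q1"
      using mult_le_cancel_right_pos[OF pos, of "1 - q1" 0] by simp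
    then have "q1 = 1" "x = 1"
      using q x by auto
    then have "3 + 2 * a + b = (1 - q2) * (1 - e)"
      unfolding a b by (simp add: algebra_simps)
    then show False
      using deriv_1 \<open>x = 1\<close> pos by simp
  qed
  have "f t = (t - q1) * (t - min q2 e) * (t - max q2 e)" for t
    by (cases "q2 \<le> e") (simp_all add: f_roots max_def min_def mult_ac)
  moreover have "q1 \<le> min q2 e" "1 \<le> max q2 e"
    using q x e by auto
  ultimately show ?thesis
    using q1 min by blast
qed

lemma Pcub_roots_location:
  assumes A: "A > 0" and C: "C > 0" and p: "p > 0"
    and u: "- 1 \<le> u" "u \<le> 1" "0 \<le> Pcub A C p h l n u"
    and energy: "n\<^sup>2 / (2 * C) \<le> h - p * u"
  shows "\<exists>e1 e2 e3. - 1 \<le> e1 \<and> e1 \<le> e2 \<and> e2 \<le> 1 \<and> 1 \<le> e3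
    \<and> (\<forall>v. Pcub A C p h l n v = (v - e1) * (v - e2) * (v - e3))"
proof -
  define H where "H = h - n\<^sup>2 / (2 * C)"
  define a b c where "a = - (H / p + n\<^sup>2 / (2 * A * p))" and "b = l * n / (A * p) - 1"
    and "c = H / p - l\<^sup>2 / (2 * A * p)"
  have P: "Pcub A C p h l n v = v ^ 3 + a * v\<^sup>2 + b * v + c" for v
    using A C p
    by (simp add: Pcub_def H_def a_def b_def c_def field_simps power2_eq_square power3_eq_cube)
  have P_minus1: "Pcub A C p h l n (- 1) = - (l + n)\<^sup>2 / (2 * A * p)"
    by (simp add: Pcub_def algebra_simps)
  have P_1: "Pcub A C p h l n 1 = - (l - n)\<^sup>2 / (2 * A * p)"
    by (simp add: Pcub_def)
  have "3 + 2 * a + b \<le> 0" if "u = 1"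
  proof -
    have "l = n"
      using u(3) A p by (simp add: that P_1 divide_le_0_iff mult_le_0_iff)
    then have "3 + 2 * a + b = 2 * (p - H) / p"
      using A p by (simp add: a_def b_def field_simps power2_eq_square)
    moreover have "p \<le> H"
      using energy that by (simp add: H_def)
    ultimately show ?thesis
      using p by (simp add: divide_nonpos_pos)
  qed
  moreover have "0 \<le> 3 - 2 * a + b" if "u = - 1"
  proof -
    have "l = - n"
      using u(3) A p by (simp add: that P_minus1 divide_le_0_iff mult_le_0_iff add_eq_0_iff2)
    then have "3 - 2 * a + b = 2 * (p + H) / p"
      using A p by (simp add: a_def b_def field_simps power2_eq_square)
    moreover have "- p \<le> H"
      using energy that by (simp add: H_def)
    ultimately show ?thesis
      using p by simp
  qed
  moreover have "Pcub A C p h l n (- 1) \<le> 0" "Pcub A C p h l n 1 \<le> 0"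
    using A p by (simp_all add: P_minus1 P_1 divide_nonpos_pos)
  ultimately show ?thesis
    using monic_cubic_roots_location[of a b c u] u unfolding P by simp
qed

theorem mainTheorem2:
  fixes A C s p h l n :: real and I :: "real set" and \<Phi> \<omega> :: "real \<Rightarrow> cmat"
  assumes "A > 0" "C > 0" "s > 0" "p > 0"
    and "open I" "is_interval I" "I \<noteq> {}"
    and "\<forall>t\<in>I. \<Phi> t \<in> SU2"
    and "\<forall>t\<in>I. (\<Phi> has_vector_derivative (\<omega> t ** \<Phi> t)) (at t)"
    and "\<forall>t\<in>I. ((\<lambda>\<tau>. mom A C p s (\<Phi> \<tau>) (\<omega> \<tau>)) has_vector_derivative
            (brk (\<omega> t) (mom A C p s (\<Phi> t) (\<omega> t)) + DL A C p s (\<Phi> t) (\<omega> t))) (at t)"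
    and "\<forall>t\<in>I. kinetic A C p s (\<Phi> t) (\<omega> t) + potential p (\<Phi> t) = h"
    and "\<forall>t\<in>I. ip (mom A C p s (\<Phi> t) (\<omega> t)) kk = l"
    and "\<forall>t\<in>I. ip (mom A C p s (\<Phi> t) (\<omega> t)) (rr (\<Phi> t)) = n"
  shows "\<exists>e1 e2 e3. -1 \<le> e1 \<and> e1 \<le> e2 \<and> e2 \<le> 1 \<and> 1 \<le> e3
          \<and> (\<forall>u. Pcub A C p h l n u = (u - e1) * (u - e2) * (u - e3))
          \<and> (\<forall>t\<in>I. (\<lambda>\<tau>. ip (rr (\<Phi> \<tau>)) kk) differentiable (at t))
          \<and> (\<forall>t\<in>I. (let u = (\<lambda>\<tau>. ip (rr (\<Phi> \<tau>)) kk); e4 = sqrt (1 + A / (p * s)) in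
                 - (s / 2) * ((u t)^2 - e4^2) * (deriv u t)^2
                   = (u t - e1) * (u t - e2) * (u t - e3)))"
proof -
  define u where "u = (\<lambda>\<tau>. ip (rr (\<Phi> \<tau>)) kk)"
  have nutation: "\<exists>\<sigma>. (u has_real_derivative \<sigma>) (at t)
      \<and> - (s / 2) * ((u t)\<^sup>2 - (sqrt (1 + A / (p * s)))\<^sup>2) * \<sigma>\<^sup>2 = Pcub A C p h l n (u t)
      \<and> \<bar>u t\<bar> \<le> 1 \<and> 0 \<le> Pcub A C p h l n (u t) \<and> n\<^sup>2 / (2 * C) \<le> h - p * u t" if "t \<in> I" for t
    using nutation_at[OF assms(1,2,4,3,5) that assms(8)] assms(9,11-13) that
    unfolding u_def by (metis (no_types, lifting))
  obtain t0 where "t0 \<in> I"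
    using assms(7) by blast
  then have t0: "\<bar>u t0\<bar> \<le> 1" "0 \<le> Pcub A C p h l n (u t0)" "n\<^sup>2 / (2 * C) \<le> h - p * u t0"
    using nutation by blast+
  then have "- 1 \<le> u t0" "u t0 \<le> 1"
    by (simp_all add: abs_le_iff)
  then obtain e1 e2 e3 where roots: "- 1 \<le> e1" "e1 \<le> e2" "e2 \<le> 1" "1 \<le> e3"
    and P: "\<forall>v. Pcub A C p h l n v = (v - e1) * (v - e2) * (v - e3)"
    using Pcub_roots_location[OF assms(1,2,4) _ _ t0(2,3)] by blast
  have "u differentiable (at t)" if "t \<in> I" for t
    using nutation[OF that] real_differentiable_def by blast
  moreover have "- (s / 2) * ((u t)\<^sup>2 - (sqrt (1 + A / (p * s)))\<^sup>2) * (deriv u t)\<^sup>2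
      = (u t - e1) * (u t - e2) * (u t - e3)" if "t \<in> I" for t
    using nutation[OF that] P DERIV_imp_deriv by metis
  ultimately show ?thesis
    using roots P unfolding u_def Let_def by blast
qed

end
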